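(* Let $K/L$ be a Galois extension of number fields with rings of integers $R\supseteq S$, let $q$ be a rational prime, $R_q=R/qR$, $S_q=S/qS\subseteq R_q$, and let $T=\operatorname{Tr}^{R_q}_{S_q}:R_q\to S_q$. Fix $s\in R_q$ and an invertible $a_0\in R_q$ such that $T(a_0)$ is invertible in $S_q$, and let $\chi$ be a distribution on $R_q$. If $(a,b)$ is distributed according to $A_{a_0S_q,s,\chi}$, then $(T(a),T(b))$ is distributed according to the Ring-LWE distribution on $S_q\times S_q$ with secret $s'=T(a_0s)/T(a_0)$ and error distribution $T(\chi)$; that is, $T(a)$ is uniform in $S_q$ and $T(b)=T(a)s'+T(e)$ with $e\sim\chi$ independent of $T(a)$.
   Context: The Galois group $\mathrm{Gal}(K/L)$ maps $qR$ to itself and fixes $S$ pointwise, hence acts on $R_q$ fixing $S_q$; $T(x)=\sum_{\sigma\in\mathrm{Gal}(K/L)}\sigma(x)$, an $S_q$-linear map $R_q\to S_q$ satisfying $\operatorname{Tr}^R_S(x)\bmod qS=T(x\bmod qR)$. $T(\chi)$ denotes the pushforward of $\chi$ under $T$. For $a_0\in R_q$, $A_{a_0S_q,s,\chi}$ is the distribution obtained by choosing $a$ uniformly in $a_0S_q$, $e\sim\chi$ independently, and outputting $(a,as+e)$. *)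

theory Defs
  imports Complex_Main "HOL-Algebra.QuotRing" "HOL-Computational_Algebra.Polynomial"
    "HOL-Probability.Probability_Mass_Function"
begin

definition number_field :: "complex set \<Rightarrow> bool" where
  "number_field K \<longleftrightarrow>
     0 \<in> K \<and> 1 \<in> K \<and>
     (\<forall>x\<in>K. \<forall>y\<in>K. x + y \<in> K \<and> x * y \<in> K) \<and>
     (\<forall>x\<in>K. - x \<in> K) \<and> (\<forall>x\<in>K. x \<noteq> 0 \<longrightarrow> inverse x \<in> K) \<and>
     (\<exists>B. finite B \<and> B \<subseteq> K \<and> (\<forall>x\<in>K. \<exists>c. x = (\<Sum>b\<in>B. of_rat (c b) * b)))"

definition algebraic_integer :: "complex \<Rightarrow> bool" where
  "algebraic_integer x \<longleftrightarrow>
     (\<exists>p :: int poly. lead_coeff p = 1 \<and> poly (map_poly of_int p) x = 0)"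

definition ring_of_integers :: "complex set \<Rightarrow> complex set" where
  "ring_of_integers K = {x \<in> K. algebraic_integer x}"

definition Gal :: "complex set \<Rightarrow> complex set \<Rightarrow> (complex \<Rightarrow> complex) set" where
  "Gal K L = {\<sigma>. bij_betw \<sigma> K K \<and>
      (\<forall>x\<in>K. \<forall>y\<in>K. \<sigma> (x + y) = \<sigma> x + \<sigma> y \<and> \<sigma> (x * y) = \<sigma> x * \<sigma> y) \<and>
      \<sigma> 1 = 1 \<and>
      (\<forall>x\<in>L. \<sigma> x = x) \<and> (\<forall>x. x \<notin> K \<longrightarrow> \<sigma> x = x)}"

definition galois_ext :: "complex set \<Rightarrow> complex set \<Rightarrow> bool" where
  "galois_ext K L \<longleftrightarrow> number_field K \<and> number_field L \<and> L \<subseteq> K \<and>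
     {x \<in> K. \<forall>\<sigma>\<in>Gal K L. \<sigma> x = x} = L"

definition crng :: "complex set \<Rightarrow> complex ring" where
  "crng A = \<lparr>carrier = A, monoid.mult = (*), one = 1, zero = 0, add = (+)\<rparr>"

definition qideal :: "complex set \<Rightarrow> nat \<Rightarrow> complex set" where
  "qideal A q = {of_nat q * r | r. r \<in> A}"

definition quot_q :: "complex set \<Rightarrow> nat \<Rightarrow> complex set ring" where
  "quot_q A q = crng A Quot qideal A q"

definition red :: "complex set \<Rightarrow> nat \<Rightarrow> complex \<Rightarrow> complex set" where
  "red A q x = qideal A q +>\<^bsub>crng A\<^esub> x"

(* S_q = S/qS, viewed inside R_q via s + qS \<mapsto> s + qR *)
definition Sq_in_Rq :: "complex set \<Rightarrow> complex set \<Rightarrow> nat \<Rightarrow> complex set set" where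
  "Sq_in_Rq R S q = red R q ` S"

definition traceq :: "complex set \<Rightarrow> complex set \<Rightarrow> nat \<Rightarrow> complex set \<Rightarrow> complex set" where
  "traceq K L q X =
     red (ring_of_integers K) q (\<Sum>\<sigma>\<in>Gal K L. \<sigma> (SOME x. x \<in> X))"

definition A_dist :: "'a ring \<Rightarrow> 'a set \<Rightarrow> 'a \<Rightarrow> 'a \<Rightarrow> 'a pmf \<Rightarrow> ('a \<times> 'a) pmf" where
  "A_dist Rq Sq a0 s chi =
     bind_pmf (pmf_of_set ((\<lambda>c. a0 \<otimes>\<^bsub>Rq\<^esub> c) ` Sq)) (\<lambda>a.
     bind_pmf chi (\<lambda>e. return_pmf (a, (a \<otimes>\<^bsub>Rq\<^esub> s) \<oplus>\<^bsub>Rq\<^esub> e)))"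

definition RLWE_dist :: "'a ring \<Rightarrow> 'a set \<Rightarrow> 'a \<Rightarrow> 'a pmf \<Rightarrow> ('a \<times> 'a) pmf" where
  "RLWE_dist Rq Sq s psi =
     bind_pmf (pmf_of_set Sq) (\<lambda>a.
     bind_pmf psi (\<lambda>e. return_pmf (a, (a \<otimes>\<^bsub>Rq\<^esub> s) \<oplus>\<^bsub>Rq\<^esub> e)))"

end

theory Submission
  imports Defs "Jordan_Normal_Form.Char_Poly"
begin

text \<open>
  Galois automorphisms fix \<open>S\<close> and permute themselves under composition, so the trace \<open>T\<close>
  is additive, \<open>S\<^sub>q\<close>-linear and takes values in \<open>S\<^sub>q\<close>. For \<open>a = a\<^sub>0 c\<close> with \<open>c\<close> uniform in \<open>S\<^sub>q\<close>
  this gives \<open>T a = T(a\<^sub>0) c\<close> and \<open>T b = c T(a\<^sub>0 s) + T e = T a \<cdot> s' + T e\<close>. Since \<open>T(a\<^sub>0)\<close> is a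
  unit of \<open>S\<^sub>q\<close>, multiplication by it permutes the finite set \<open>S\<^sub>q\<close>, so \<open>T a\<close> is again uniform.
  Most of the work lies in the foundations: algebraic integers form a ring (eigenvalues of
  integer matrices are closed under Kronecker sums and products), and \<open>R/qR\<close> is finite,
  because integer combinations that vanish modulo \<open>q\<close> only with coefficients divisible by \<open>q\<close>
  are \<open>\<rat>\<close>-linearly independent, hence bounded in size by \<open>[K:\<rat>]\<close>, and a maximal such family
  spans \<open>R\<close> modulo \<open>q\<close>.
\<close>

section \<open>Algebraic integers\<close>

lemma algebraic_integer_iff_algebraic_int: "algebraic_integer x \<longleftrightarrow> algebraic_int x"
  unfolding algebraic_integer_def algebraic_int_altdef_ipoly by blast

lemma algebraic_integer_of_int_eigenvector_nat:
  fixes M :: "nat \<Rightarrow> nat \<Rightarrow> int" and v :: "nat \<Rightarrow> complex"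
  assumes z: "z < n" "v z \<noteq> 0" and ev: "\<forall>i<n. (\<Sum>j<n. of_int (M i j) * v j) = x * v i"
  shows "algebraic_integer x"
proof -
  define A where "A = mat n n (\<lambda>(i,j). M i j)"
  define w where "w = vec n v"
  have A: "A \<in> carrier_mat n n" unfolding A_def by simp
  have "eigenvector (map_mat of_int A) w x"
    unfolding eigenvector_def
  proof (intro conjI)
    show "w \<in> carrier_vec (dim_row (map_mat of_int A))" using A unfolding w_def by simp
    show "w \<noteq> 0\<^sub>v (dim_row (map_mat of_int A))"
    proof
      assume "w = 0\<^sub>v (dim_row (map_mat of_int A))"
      hence "w $ z = 0" using A z by simp
      thus False using z unfolding w_def by simp
    qed
    show "map_mat of_int A *\<^sub>v w = x \<cdot>\<^sub>v w"
    proof (rule eq_vecI)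
      fix i assume "i < dim_vec (x \<cdot>\<^sub>v w)"
      hence i: "i < n" unfolding w_def by simp
      have "(map_mat of_int A *\<^sub>v w) $ i = (\<Sum>j<n. of_int (M i j) * v j)"
        using i A unfolding w_def A_def
        by (simp add: scalar_prod_def lessThan_atLeast0 mult.commute)
      also have "\<dots> = x * v i" using ev i by simp
      finally show "(map_mat of_int A *\<^sub>v w) $ i = (x \<cdot>\<^sub>v w) $ i" using i unfolding w_def by simp
    qed (insert A, simp add: w_def)
  qed
  hence "eigenvalue (map_mat of_int A) x" unfolding eigenvalue_def by blast
  moreover have A': "map_mat of_int A \<in> carrier_mat n n" using A by simp
  ultimately have "poly (char_poly (map_mat of_int A)) x = 0"
    using eigenvalue_root_char_poly[OF A', of x] by blast
  hence "poly (map_poly of_int (char_poly A)) x = 0"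
    by (metis of_int_hom.char_poly_hom[OF A])
  moreover have "lead_coeff (char_poly A) = 1" using degree_monic_char_poly[OF A] by simp
  ultimately show ?thesis unfolding algebraic_integer_def by blast
qed

lemma algebraic_integer_of_int_eigenvector:
  fixes I :: "'a set" and M :: "'a \<Rightarrow> 'a \<Rightarrow> int" and v :: "'a \<Rightarrow> complex"
  assumes "finite I" "z \<in> I" "v z \<noteq> 0"
    and ev: "\<forall>i\<in>I. (\<Sum>j\<in>I. of_int (M i j) * v j) = x * v i"
  shows "algebraic_integer x"
proof -
  obtain h where h: "bij_betw h {0..<card I} I" using ex_bij_betw_nat_finite[OF assms(1)] by blast
  have "z \<in> h ` {0..<card I}" using h assms(2) by (simp add: bij_betw_def)
  then obtain k where k: "k < card I" "h k = z" by auto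
  show ?thesis
  proof (rule algebraic_integer_of_int_eigenvector_nat
      [where z=k and n="card I" and v="v \<circ> h" and M="\<lambda>i j. M (h i) (h j)"])
    show "k < card I" "(v \<circ> h) k \<noteq> 0" using k assms by auto
    show "\<forall>i<card I. (\<Sum>j<card I. of_int (M (h i) (h j)) * (v \<circ> h) j) = x * (v \<circ> h) i"
    proof (intro allI impI)
      fix i assume i: "i < card I"
      have "(\<Sum>j<card I. of_int (M (h i) (h j)) * (v \<circ> h) j) = (\<Sum>j\<in>I. of_int (M (h i) j) * v j)"
        using sum.reindex_bij_betw[OF h, of "\<lambda>j. of_int (M (h i) j) * v j"]
        by (simp add: lessThan_atLeast0)
      also have "\<dots> = x * v (h i)" using ev h i unfolding bij_betw_def by auto
      finally show "(\<Sum>j<card I. of_int (M (h i) (h j)) * (v \<circ> h) j) = x * (v \<circ> h) i" by simp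
    qed
  qed
qed

text \<open>The eigenvector is \<open>(1, x, \<dots>, x\<^sup>d\<^sup>-\<^sup>1)\<close> for the companion matrix of a monic equation of \<open>x\<close>.\<close>

lemma algebraic_integer_imp_int_eigenvector:
  assumes "algebraic_integer x"
  obtains I :: "nat set" and M v z where "finite I" "z \<in> I" "v z \<noteq> (0::complex)"
    "\<forall>i\<in>I. (\<Sum>j\<in>I. of_int (M i j) * v j) = x * v i"
proof -
  obtain p :: "int poly" where p: "lead_coeff p = 1" "poly (map_poly of_int p) x = 0"
    using assms unfolding algebraic_integer_def by blast
  define d where "d = degree p"
  have "poly (map_poly of_int p) x = (\<Sum>j\<le>d. of_int (coeff p j) * x ^ j)"
    unfolding poly_altdef d_def by (simp add: coeff_map_poly degree_map_poly)
  also have "\<dots> = (\<Sum>j<d. of_int (coeff p j) * x ^ j) + x ^ d"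
    using p(1) unfolding d_def by (simp add: lessThan_Suc_atMost[symmetric])
  finally have xd: "x ^ d = - (\<Sum>j<d. of_int (coeff p j) * x ^ j)" using p(2)
    by (simp add: eq_neg_iff_add_eq_0 add.commute)
  have d0: "d > 0"
    using xd by (cases d) simp_all
  define M where "M = (\<lambda>i j. if i + 1 < d then (if j = i + 1 then 1 else 0) else - coeff p j)"
  define v where "v = (\<lambda>j::nat. x ^ j)"
  have ev: "\<forall>i\<in>{..<d}. (\<Sum>j\<in>{..<d}. of_int (M i j) * v j) = x * v i"
  proof
    fix i assume i: "i \<in> {..<d}"
    show "(\<Sum>j\<in>{..<d}. of_int (M i j) * v j) = x * v i"
    proof (cases "i + 1 < d")
      case True
      have "(\<Sum>j\<in>{..<d}. of_int (M i j) * v j) = (\<Sum>j\<in>{..<d}. if j = i + 1 then x ^ (i+1) else 0)"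
        unfolding M_def v_def using True by (intro sum.cong) auto
      also have "\<dots> = x ^ (i + 1)" using True by (simp add: sum.delta')
      finally show ?thesis unfolding v_def by simp
    next
      case False
      hence "i = d - 1" using i by simp
      hence "x * v i = x ^ d" unfolding v_def using d0 by (metis Suc_diff_1 power_Suc)
      moreover have "(\<Sum>j\<in>{..<d}. of_int (M i j) * v j) = - (\<Sum>j<d. of_int (coeff p j) * x ^ j)"
        unfolding M_def v_def using False by (simp add: sum_negf)
      ultimately show ?thesis using xd by simp
    qed
  qed
  show ?thesis
  proof (rule that[of "{..<d}" 0 v M])
    show "v 0 \<noteq> 0" unfolding v_def by simp
  qed (use d0 ev in auto)
qed

text \<open>\<open>x + y\<close> is an eigenvalue of the Kronecker sum \<open>M \<otimes> 1 + 1 \<otimes> N\<close> with eigenvector \<open>v \<otimes> w\<close>.\<close>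

lemma algebraic_integer_add:
  assumes "algebraic_integer x" "algebraic_integer y"
  shows "algebraic_integer (x + y)"
proof -
  obtain I :: "nat set" and M v z where A: "finite I" "z \<in> I" "v z \<noteq> 0"
    "\<forall>i\<in>I. (\<Sum>j\<in>I. of_int (M i j) * v j) = x * v i"
    by (rule algebraic_integer_imp_int_eigenvector[OF assms(1)])
  obtain J :: "nat set" and N w j0 where B: "finite J" "j0 \<in> J" "w j0 \<noteq> 0"
    "\<forall>i\<in>J. (\<Sum>j\<in>J. of_int (N i j) * w j) = y * w i"
    by (rule algebraic_integer_imp_int_eigenvector[OF assms(2)])
  define P where "P = (\<lambda>(i::nat,j::nat) (k,l).
    M i k * (if j = l then 1 else 0) + (if i = k then 1 else 0) * N j l)"
  define u where "u = (\<lambda>(i,j). v i * w j)"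
  show ?thesis
  proof (rule algebraic_integer_of_int_eigenvector[where I="I \<times> J" and z="(z,j0)" and v=u and M=P])
    show "finite (I \<times> J)" "(z, j0) \<in> I \<times> J" "u (z, j0) \<noteq> 0" using A B unfolding u_def by auto
    show "\<forall>i\<in>I \<times> J. (\<Sum>j\<in>I \<times> J. of_int (P i j) * u j) = (x + y) * u i"
    proof
      fix ij assume "ij \<in> I \<times> J"
      then obtain i j where ij: "ij = (i,j)" "i \<in> I" "j \<in> J" by auto
      have "(\<Sum>kl\<in>I \<times> J. of_int (P ij kl) * u kl)
          = (\<Sum>k\<in>I. \<Sum>l\<in>J. of_int (P (i,j) (k,l)) * u (k,l))"
        unfolding ij by (simp add: sum.cartesian_product)
      also have "\<dots> = (\<Sum>k\<in>I. \<Sum>l\<in>J. (if j = l then of_int (M i k) * v k * w l else 0)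
                          + (if i = k then of_int (N j l) * v k * w l else 0))"
        unfolding P_def u_def by (intro sum.cong refl) (auto simp: algebra_simps)
      also have "\<dots> = (\<Sum>k\<in>I. \<Sum>l\<in>J. (if j = l then of_int (M i k) * v k * w l else 0))
                         + (\<Sum>l\<in>J. \<Sum>k\<in>I. (if i = k then of_int (N j l) * v k * w l else 0))"
        by (simp add: sum.distrib sum.swap[of _ I J])
      also have "\<dots> = (\<Sum>k\<in>I. of_int (M i k) * v k * w j) + (\<Sum>l\<in>J. of_int (N j l) * v i * w l)"
        using A(1) B(1) ij by (simp add: sum.delta)
      also have "\<dots> = (\<Sum>k\<in>I. of_int (M i k) * v k) * w j + v i * (\<Sum>l\<in>J. of_int (N j l) * w l)"
        by (simp add: sum_distrib_right sum_distrib_left mult.assoc mult.left_commute)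
      also have "\<dots> = x * v i * w j + v i * (y * w j)"
        using A(4) B(4) ij by simp
      finally show "(\<Sum>kl\<in>I \<times> J. of_int (P ij kl) * u kl) = (x + y) * u ij"
        unfolding ij u_def by (simp add: algebra_simps)
    qed
  qed
qed

lemma algebraic_integer_mult:
  assumes "algebraic_integer x" "algebraic_integer y"
  shows "algebraic_integer (x * y)"
proof -
  obtain I :: "nat set" and M v z where A: "finite I" "z \<in> I" "v z \<noteq> 0"
    "\<forall>i\<in>I. (\<Sum>j\<in>I. of_int (M i j) * v j) = x * v i"
    by (rule algebraic_integer_imp_int_eigenvector[OF assms(1)])
  obtain J :: "nat set" and N w j0 where B: "finite J" "j0 \<in> J" "w j0 \<noteq> 0"
    "\<forall>i\<in>J. (\<Sum>j\<in>J. of_int (N i j) * w j) = y * w i"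
    by (rule algebraic_integer_imp_int_eigenvector[OF assms(2)])
  define P where "P = (\<lambda>(i::nat,j::nat) (k,l). M i k * N j l)"
  define u where "u = (\<lambda>(i,j). v i * w j)"
  show ?thesis
  proof (rule algebraic_integer_of_int_eigenvector[where I="I \<times> J" and z="(z,j0)" and v=u and M=P])
    show "finite (I \<times> J)" "(z, j0) \<in> I \<times> J" "u (z, j0) \<noteq> 0" using A B unfolding u_def by auto
    show "\<forall>i\<in>I \<times> J. (\<Sum>j\<in>I \<times> J. of_int (P i j) * u j) = (x * y) * u i"
    proof
      fix ij assume "ij \<in> I \<times> J"
      then obtain i j where ij: "ij = (i,j)" "i \<in> I" "j \<in> J" by auto
      have "(\<Sum>kl\<in>I \<times> J. of_int (P ij kl) * u kl)
          = (\<Sum>k\<in>I. \<Sum>l\<in>J. of_int (P (i,j) (k,l)) * u (k,l))"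
        unfolding ij by (simp add: sum.cartesian_product)
      also have "\<dots> = (\<Sum>k\<in>I. of_int (M i k) * v k * (\<Sum>l\<in>J. of_int (N j l) * w l))"
        unfolding P_def u_def by (simp add: sum_distrib_left algebra_simps)
      also have "\<dots> = (x * v i) * (y * w j)"
        using A(4) B(4) ij by (simp add: sum_distrib_right[symmetric])
      finally show "(\<Sum>kl\<in>I \<times> J. of_int (P ij kl) * u kl) = (x * y) * u ij"
        unfolding ij u_def by (simp add: algebra_simps)
    qed
  qed
qed

lemma sum_mem_add_closed:
  assumes "0 \<in> X" "\<And>x y. x \<in> X \<Longrightarrow> y \<in> X \<Longrightarrow> x + y \<in> X" "\<And>a. a \<in> A \<Longrightarrow> f a \<in> X"
  shows "sum f A \<in> X"
  using assms(3) by (induction A rule: infinite_finite_induct) (use assms(1,2) in auto)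

section \<open>Rings of integers\<close>

locale num_field =
  fixes K :: "complex set"
  assumes number_field: "number_field K"
begin

lemma zero_mem: "0 \<in> K" and one_mem: "1 \<in> K"
  and add_mem: "x \<in> K \<Longrightarrow> y \<in> K \<Longrightarrow> x + y \<in> K"
  and mult_mem: "x \<in> K \<Longrightarrow> y \<in> K \<Longrightarrow> x * y \<in> K"
  and uminus_mem: "x \<in> K \<Longrightarrow> - x \<in> K"
  using number_field unfolding number_field_def by auto

lemma of_nat_mem: "of_nat n \<in> K"
  by (induction n) (auto intro: add_mem zero_mem one_mem)

lemma of_int_mem: "of_int n \<in> K"
  by (cases n rule: int_cases2) (auto intro: uminus_mem of_nat_mem)

lemma sum_mem: "(\<And>a. a \<in> A \<Longrightarrow> f a \<in> K) \<Longrightarrow> sum f A \<in> K"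
  by (rule sum_mem_add_closed) (auto intro: zero_mem add_mem)

lemma integers_iff: "x \<in> ring_of_integers K \<longleftrightarrow> x \<in> K \<and> algebraic_int x"
  unfolding ring_of_integers_def algebraic_integer_iff_algebraic_int by simp

lemma integers_subset: "ring_of_integers K \<subseteq> K"
  by (auto simp: integers_iff)

lemma integers_zero: "0 \<in> ring_of_integers K" and integers_one: "1 \<in> ring_of_integers K"
  using zero_mem one_mem by (auto simp: integers_iff)

lemma integers_of_int: "of_int n \<in> ring_of_integers K"
  using of_int_mem by (auto simp: integers_iff)

lemma integers_of_nat: "of_nat n \<in> ring_of_integers K"
  using integers_of_int[of "int n"] by simp

lemma integers_add:
  "x \<in> ring_of_integers K \<Longrightarrow> y \<in> ring_of_integers K \<Longrightarrow> x + y \<in> ring_of_integers K"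
  using add_mem algebraic_integer_add
  by (auto simp: integers_iff algebraic_integer_iff_algebraic_int[symmetric])

lemma integers_mult:
  "x \<in> ring_of_integers K \<Longrightarrow> y \<in> ring_of_integers K \<Longrightarrow> x * y \<in> ring_of_integers K"
  using mult_mem algebraic_integer_mult
  by (auto simp: integers_iff algebraic_integer_iff_algebraic_int[symmetric])

lemma integers_uminus: "x \<in> ring_of_integers K \<Longrightarrow> - x \<in> ring_of_integers K"
  using uminus_mem by (auto simp: integers_iff)

lemma integers_diff:
  "x \<in> ring_of_integers K \<Longrightarrow> y \<in> ring_of_integers K \<Longrightarrow> x - y \<in> ring_of_integers K"
  using integers_add[of x "- y"] integers_uminus[of y] by simp

lemma integers_sum: "(\<And>a. a \<in> A \<Longrightarrow> f a \<in> ring_of_integers K) \<Longrightarrow> sum f A \<in> ring_of_integers K"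
  by (rule sum_mem_add_closed) (auto intro: integers_zero integers_add)

lemma crng_integers_cring: "cring (crng (ring_of_integers K))"
proof (rule cringI)
  show "abelian_group (crng (ring_of_integers K))"
    by (rule abelian_groupI)
      (auto simp: crng_def integers_add integers_zero intro!: bexI[of _ "- _"] integers_uminus)
  show "comm_monoid (crng (ring_of_integers K))"
    by (rule comm_monoidI) (auto simp: crng_def integers_mult integers_one)
qed (auto simp: crng_def algebra_simps)

lemma qideal_ideal: "ideal (qideal (ring_of_integers K) q) (crng (ring_of_integers K))"
proof -
  have "qideal (ring_of_integers K) q = PIdl\<^bsub>crng (ring_of_integers K)\<^esub> (of_nat q)"
    unfolding cgenideal_def qideal_def crng_def by (auto simp: mult.commute)
  thus ?thesis using cring.cgenideal_ideal[OF crng_integers_cring, of "of_nat q"] integers_of_nat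
    by (simp add: crng_def)
qed

end

section \<open>Galois automorphisms and the relative trace\<close>

locale galois_mod_q =
  fixes K L :: "complex set" and q :: nat
  assumes galois: "galois_ext K L" and q_prime: "prime q"
begin

sublocale K: num_field K
  using galois unfolding galois_ext_def by unfold_locales blast

sublocale L: num_field L
  using galois unfolding galois_ext_def by unfold_locales blast

lemma L_subset_K: "L \<subseteq> K" and fixed_field_Gal: "{x \<in> K. \<forall>\<sigma>\<in>Gal K L. \<sigma> x = x} = L"
  using galois unfolding galois_ext_def by auto

context
  fixes \<sigma> assumes \<sigma>: "\<sigma> \<in> Gal K L"
begin

lemma Gal_mem: "x \<in> K \<Longrightarrow> \<sigma> x \<in> K"
  and Gal_add: "x \<in> K \<Longrightarrow> y \<in> K \<Longrightarrow> \<sigma> (x + y) = \<sigma> x + \<sigma> y"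
  and Gal_mult: "x \<in> K \<Longrightarrow> y \<in> K \<Longrightarrow> \<sigma> (x * y) = \<sigma> x * \<sigma> y"
  and Gal_one: "\<sigma> 1 = 1"
  and Gal_fixes_L: "x \<in> L \<Longrightarrow> \<sigma> x = x"
  and Gal_outside: "x \<notin> K \<Longrightarrow> \<sigma> x = x"
  using \<sigma> unfolding Gal_def bij_betw_def by auto

lemma Gal_zero: "\<sigma> 0 = 0"
  using Gal_add[OF K.zero_mem K.zero_mem] by simp

lemma Gal_uminus: "x \<in> K \<Longrightarrow> \<sigma> (- x) = - \<sigma> x"
  using Gal_add[of x "- x"] K.uminus_mem[of x] Gal_zero by (simp add: add_eq_0_iff)

lemma Gal_of_nat: "\<sigma> (of_nat n) = of_nat n"
proof (induction n)
  case (Suc n)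
  have "\<sigma> (1 + of_nat n) = 1 + of_nat n"
    using Gal_add[OF K.one_mem K.of_nat_mem] Gal_one Suc by simp
  thus ?case by (simp add: add.commute)
qed (simp add: Gal_zero)

lemma Gal_of_int: "\<sigma> (of_int n) = of_int n"
  by (cases n rule: int_cases2) (simp_all add: Gal_of_nat Gal_uminus K.of_nat_mem)

lemma Gal_poly:
  "x \<in> K \<Longrightarrow> poly (map_poly of_int p) x \<in> K \<and>
     \<sigma> (poly (map_poly of_int p) x) = poly (map_poly of_int p) (\<sigma> x)"
proof (induction p)
  case (pCons a p)
  have "poly (map_poly of_int (pCons a p)) y = of_int a + y * poly (map_poly of_int p) y"
    for y :: complex
    by (cases "a = 0 \<and> p = 0") (simp_all add: map_poly_pCons)
  thus ?case using pCons Gal_add Gal_mult Gal_of_int Gal_mem K.of_int_mem K.add_mem K.mult_mem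
    by simp
qed (simp add: Gal_zero K.zero_mem)

lemma Gal_integers:
  assumes "x \<in> ring_of_integers K"
  shows "\<sigma> x \<in> ring_of_integers K"
proof -
  obtain p :: "int poly" where p: "lead_coeff p = 1" "poly (map_poly of_int p) x = 0"
    using assms unfolding ring_of_integers_def algebraic_integer_def by blast
  have x: "x \<in> K" using assms K.integers_subset by blast
  have "poly (map_poly of_int p) (\<sigma> x) = 0" using Gal_poly[OF x, of p] p Gal_zero by simp
  thus ?thesis using p Gal_mem[OF x] unfolding ring_of_integers_def algebraic_integer_def by blast
qed

lemma Gal_sum: "(\<And>a. a \<in> A \<Longrightarrow> f a \<in> K) \<Longrightarrow> \<sigma> (sum f A) = (\<Sum>a\<in>A. \<sigma> (f a))"
proof (induction A rule: infinite_finite_induct)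
  case (insert a A)
  have "sum f A \<in> K" using insert.prems by (intro K.sum_mem) auto
  thus ?case using insert Gal_add by simp
qed (auto simp: Gal_zero)

lemma Gal_inj: "inj \<sigma>"
proof
  fix a b assume ab: "\<sigma> a = \<sigma> b"
  have inj: "inj_on \<sigma> K" using \<sigma> unfolding Gal_def bij_betw_def by auto
  consider "a \<in> K" "b \<in> K" | "a \<notin> K \<or> b \<notin> K" by blast
  thus "a = b"
  proof cases
    case 1 thus ?thesis using inj ab by (simp add: inj_on_def)
  next
    case 2 thus ?thesis using ab Gal_outside Gal_mem by metis
  qed
qed

end

lemma Gal_comp:
  assumes \<sigma>: "\<sigma> \<in> Gal K L" and \<tau>: "\<tau> \<in> Gal K L"
  shows "\<tau> \<circ> \<sigma> \<in> Gal K L"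
  unfolding Gal_def
proof (intro CollectI conjI ballI allI impI)
  show "bij_betw (\<tau> \<circ> \<sigma>) K K" using \<sigma> \<tau> unfolding Gal_def by (auto intro: bij_betw_trans)
next
  fix x y assume "x \<in> K" "y \<in> K"
  thus "(\<tau> \<circ> \<sigma>) (x + y) = (\<tau> \<circ> \<sigma>) x + (\<tau> \<circ> \<sigma>) y" "(\<tau> \<circ> \<sigma>) (x * y) = (\<tau> \<circ> \<sigma>) x * (\<tau> \<circ> \<sigma>) y"
    using Gal_add[OF \<sigma>] Gal_add[OF \<tau>] Gal_mult[OF \<sigma>] Gal_mult[OF \<tau>] Gal_mem[OF \<sigma>] by auto
qed (simp_all add: Gal_one[OF \<sigma>] Gal_one[OF \<tau>] Gal_fixes_L[OF \<sigma>] Gal_fixes_L[OF \<tau>]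
    Gal_outside[OF \<sigma>] Gal_outside[OF \<tau>])

definition trace :: "complex \<Rightarrow> complex" where
  "trace x = (\<Sum>\<sigma>\<in>Gal K L. \<sigma> x)"

lemma trace_mem: "x \<in> K \<Longrightarrow> trace x \<in> K"
  unfolding trace_def by (rule K.sum_mem) (erule Gal_mem)

lemma trace_integers: "x \<in> ring_of_integers K \<Longrightarrow> trace x \<in> ring_of_integers K"
  unfolding trace_def by (rule K.integers_sum) (erule Gal_integers)

lemma trace_Gal_invariant:
  assumes "\<tau> \<in> Gal K L" "x \<in> K"
  shows "\<tau> (trace x) = trace x"
proof (cases "finite (Gal K L)")
  case False thus ?thesis unfolding trace_def using Gal_zero[OF assms(1)] by simp
next
  case True
  have inj: "inj_on ((\<circ>) \<tau>) (Gal K L)"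
    using Gal_inj[OF assms(1)] by (auto simp: inj_on_def inj_def fun_eq_iff)
  have perm: "(\<circ>) \<tau> ` Gal K L = Gal K L"
    by (rule endo_inj_surj[OF True _ inj]) (use Gal_comp assms(1) in auto)
  have "\<tau> (trace x) = (\<Sum>\<sigma>\<in>Gal K L. (\<tau> \<circ> \<sigma>) x)"
    unfolding trace_def comp_apply by (rule Gal_sum[OF assms(1)]) (rule Gal_mem[OF _ assms(2)])
  also have "\<dots> = (\<Sum>\<sigma>\<in>(\<circ>) \<tau> ` Gal K L. \<sigma> x)"
    using sum.reindex[OF inj, of "\<lambda>\<sigma>. \<sigma> x"] by simp
  also have "\<dots> = trace x" unfolding perm trace_def ..
  finally show ?thesis .
qed

lemma trace_in_L: "x \<in> K \<Longrightarrow> trace x \<in> L"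
  using fixed_field_Gal trace_mem trace_Gal_invariant by blast

lemma trace_in_integers_L: "x \<in> ring_of_integers K \<Longrightarrow> trace x \<in> ring_of_integers L"
  using trace_in_L trace_integers K.integers_subset unfolding ring_of_integers_def by blast

lemma trace_add: "x \<in> K \<Longrightarrow> y \<in> K \<Longrightarrow> trace (x + y) = trace x + trace y"
  unfolding trace_def by (simp add: Gal_add sum.distrib)

lemma trace_scale: "c \<in> L \<Longrightarrow> x \<in> K \<Longrightarrow> trace (c * x) = c * trace x"
  unfolding trace_def using L_subset_K by (auto simp: Gal_mult Gal_fixes_L sum_distrib_left)

end

section \<open>Reduction modulo \<open>q\<close>\<close>

lemma red_altdef: "red A q x = {of_nat q * r + x | r. r \<in> A}"
  unfolding red_def a_r_coset_def r_coset_def crng_def qideal_def by auto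

context galois_mod_q
begin

abbreviation "R \<equiv> ring_of_integers K"
abbreviation "S \<equiv> ring_of_integers L"
abbreviation "Rq \<equiv> quot_q R q"
abbreviation "Sq \<equiv> Sq_in_Rq R S q"
abbreviation "rd \<equiv> red R q"
abbreviation "T \<equiv> traceq K L q"

lemma S_subset_R: "S \<subseteq> R"
  using L_subset_K unfolding ring_of_integers_def by auto

lemma cring_Rq: "cring Rq"
  unfolding quot_q_def by (rule ideal.quotient_is_cring[OF K.qideal_ideal K.crng_integers_cring])

lemma red_ring_hom: "rd \<in> Ring.ring_hom (crng R) Rq"
proof -
  have "rd = (+>\<^bsub>crng R\<^esub>) (qideal R q)"
    by (simp add: fun_eq_iff red_def)
  thus ?thesis unfolding quot_q_def by (simp add: ideal.rcos_ring_hom[OF K.qideal_ideal])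
qed

lemma carrier_Rq: "carrier Rq = rd ` R"
  unfolding quot_q_def FactRing_def A_RCOSETS_def RCOSETS_def red_def a_r_coset_def
  by (auto simp: crng_def)

lemma red_add: "x \<in> R \<Longrightarrow> y \<in> R \<Longrightarrow> rd (x + y) = rd x \<oplus>\<^bsub>Rq\<^esub> rd y"
  using Ring.ring_hom_add[OF red_ring_hom, of x y] by (simp add: crng_def)

lemma red_mult: "x \<in> R \<Longrightarrow> y \<in> R \<Longrightarrow> rd (x * y) = rd x \<otimes>\<^bsub>Rq\<^esub> rd y"
  using Ring.ring_hom_mult[OF red_ring_hom, of x y] by (simp add: crng_def)

lemma mem_red_self: "x \<in> rd x"
  unfolding red_altdef using K.integers_zero by force

lemma red_eq_red_iff:
  assumes "x \<in> R" "y \<in> R"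
  shows "rd x = rd y \<longleftrightarrow> (\<exists>r\<in>R. x - y = of_nat q * r)"
proof
  assume "rd x = rd y"
  thus "\<exists>r\<in>R. x - y = of_nat q * r"
    using mem_red_self[of x] unfolding red_altdef by auto
next
  assume "\<exists>r\<in>R. x - y = of_nat q * r"
  then obtain r0 where r0: "r0 \<in> R" "x = of_nat q * r0 + y" by (auto simp: diff_eq_eq)
  have "of_nat q * r + x = of_nat q * (r + r0) + y" "of_nat q * r + y = of_nat q * (r - r0) + x"
    for r :: complex
    using r0 by (simp_all add: algebra_simps)
  thus "rd x = rd y"
    unfolding red_altdef using r0(1) K.integers_add K.integers_diff by blast
qed

lemma traceq_red:
  assumes w: "w \<in> R"
  shows "T (rd w) = rd (trace w)"
proof -
  define x0 where "x0 = (SOME x. x \<in> rd w)"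
  have "x0 \<in> rd w" unfolding x0_def using mem_red_self by (rule someI)
  then obtain r where r: "r \<in> R" "x0 = of_nat q * r + w" unfolding red_altdef by blast
  have x0: "x0 \<in> R" using r w K.integers_add K.integers_mult K.integers_of_nat by simp
  have rK: "r \<in> K" "w \<in> K" using r(1) w K.integers_subset by auto
  have "trace x0 - trace w = of_nat q * trace r"
    using r(2) trace_add[OF K.mult_mem[OF K.of_nat_mem rK(1)] rK(2)] trace_scale[OF L.of_nat_mem rK(1)]
    by simp
  hence "rd (trace x0) = rd (trace w)"
    using red_eq_red_iff[OF trace_integers[OF x0] trace_integers[OF w]] trace_integers[OF r(1)]
    by blast
  thus ?thesis unfolding traceq_def x0_def[symmetric] trace_def by simp
qed

lemma Sq_subset: "Sq \<subseteq> carrier Rq"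
  unfolding Sq_in_Rq_def carrier_Rq using S_subset_R by auto

lemma Sq_nonempty: "Sq \<noteq> {}"
  unfolding Sq_in_Rq_def using L.integers_zero by auto

lemma Sq_mult:
  assumes "c \<in> Sq" "d \<in> Sq"
  shows "c \<otimes>\<^bsub>Rq\<^esub> d \<in> Sq"
proof -
  obtain s0 s1 where s: "s0 \<in> S" "s1 \<in> S" "c = rd s0" "d = rd s1"
    using assms unfolding Sq_in_Rq_def by auto
  hence "c \<otimes>\<^bsub>Rq\<^esub> d = rd (s0 * s1)" using S_subset_R red_mult by auto
  thus ?thesis using s L.integers_mult unfolding Sq_in_Rq_def by auto
qed

lemma traceq_in_Sq: "X \<in> carrier Rq \<Longrightarrow> T X \<in> Sq"
  using carrier_Rq traceq_red trace_in_integers_L unfolding Sq_in_Rq_def by auto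

lemma traceq_add:
  assumes "X \<in> carrier Rq" "Y \<in> carrier Rq"
  shows "T (X \<oplus>\<^bsub>Rq\<^esub> Y) = T X \<oplus>\<^bsub>Rq\<^esub> T Y"
proof -
  obtain u v where uv: "u \<in> R" "v \<in> R" "X = rd u" "Y = rd v" using assms carrier_Rq by auto
  have tr: "trace (u + v) = trace u + trace v"
    using uv K.integers_subset by (intro trace_add) auto
  have "T (X \<oplus>\<^bsub>Rq\<^esub> Y) = T (rd (u + v))" using uv red_add by simp
  also have "\<dots> = rd (trace u + trace v)" using uv traceq_red K.integers_add tr by simp
  also have "\<dots> = rd (trace u) \<oplus>\<^bsub>Rq\<^esub> rd (trace v)"
    using uv by (simp add: red_add trace_integers)
  also have "\<dots> = T X \<oplus>\<^bsub>Rq\<^esub> T Y" unfolding uv(3,4) traceq_red[OF uv(1)] traceq_red[OF uv(2)] ..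
  finally show ?thesis .
qed

lemma traceq_Sq_linear:
  assumes "c \<in> Sq" "X \<in> carrier Rq"
  shows "T (c \<otimes>\<^bsub>Rq\<^esub> X) = c \<otimes>\<^bsub>Rq\<^esub> T X"
proof -
  obtain s0 where s0: "s0 \<in> S" "c = rd s0" using assms(1) unfolding Sq_in_Rq_def by auto
  obtain u where u: "u \<in> R" "X = rd u" using assms(2) carrier_Rq by auto
  have s0': "s0 \<in> R" "s0 \<in> L" using s0 S_subset_R L.integers_subset by auto
  have tr: "trace (s0 * u) = s0 * trace u"
    using u s0' K.integers_subset by (intro trace_scale) auto
  have "T (c \<otimes>\<^bsub>Rq\<^esub> X) = T (rd (s0 * u))" using s0 s0' u red_mult by simp
  also have "\<dots> = rd (s0 * trace u)" using s0' u traceq_red K.integers_mult tr by simp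
  also have "\<dots> = rd s0 \<otimes>\<^bsub>Rq\<^esub> rd (trace u)"
    using u s0' by (simp add: red_mult trace_integers)
  also have "\<dots> = c \<otimes>\<^bsub>Rq\<^esub> T X" unfolding u(2) s0(2) traceq_red[OF u(1)] ..
  finally show ?thesis .
qed

end

section \<open>Finiteness of \<open>R/qR\<close>\<close>

lemma finite_rat_common_denominator:
  fixes u :: "'a \<Rightarrow> rat"
  assumes "finite Y"
  shows "\<exists>D::int. D > 0 \<and> (\<forall>v\<in>Y. \<exists>n::int. of_int n = u v * of_int D)"
  using assms
proof (induction Y rule: finite_induct)
  case empty thus ?case by (intro exI[of _ 1]) auto
next
  case (insert a Y)
  then obtain D where D: "D > 0" "\<forall>v\<in>Y. \<exists>n::int. of_int n = u v * of_int D" by blast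
  obtain n d where nd: "quotient_of (u a) = (n, d)" by (cases "quotient_of (u a)")
  have d: "d > 0" using quotient_of_denom_pos[OF nd] .
  have "u a * of_int (D * d) = of_int (n * D)"
    using quotient_of_div[OF nd] d by (simp add: field_simps)
  moreover have "u v * of_int (D * d) = of_int (m * d)" if "of_int m = u v * of_int D" for v m
    using that by (simp add: algebra_simps)
  ultimately show ?case
    using D d by (intro exI[of _ "D * d"]) (metis insert_iff mult_pos_pos)
qed

interpretation rat_vs: vector_space "\<lambda>(r::rat) (x::complex). of_rat r * x"
  by unfold_locales (auto simp: algebra_simps of_rat_add of_rat_mult)

context galois_mod_q
begin

definition q_independent :: "complex set \<Rightarrow> bool" where
  "q_independent Y \<longleftrightarrow> (\<forall>c :: complex \<Rightarrow> int.
     (\<exists>r\<in>R. (\<Sum>y\<in>Y. of_int (c y) * y) = of_nat q * r) \<longrightarrow> (\<forall>y\<in>Y. int q dvd c y))"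

lemma q_gt_1: "q > 1"
  using q_prime prime_gt_1_nat by blast

text \<open>Infinite descent: a vanishing combination has coefficients divisible by \<open>q\<close>, and dividing
  them by \<open>q\<close> gives a smaller vanishing combination.\<close>

lemma q_independent_combination_eq_0:
  assumes "finite Y" "q_independent Y" "(\<Sum>y\<in>Y. of_int (c y) * y) = 0"
  shows "\<forall>y\<in>Y. c y = 0"
  using assms(3)
proof (induction "\<Sum>y\<in>Y. nat \<bar>c y\<bar>" arbitrary: c rule: less_induct)
  case less
  have "\<forall>y\<in>Y. int q dvd c y"
    using assms(2) less.prems K.integers_zero unfolding q_independent_def by fastforce
  define d where "d y = c y div int q" for y
  have d: "\<forall>y\<in>Y. c y = int q * d y"
    using \<open>\<forall>y\<in>Y. int q dvd c y\<close> unfolding d_def by simp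
  have "of_nat q * (\<Sum>y\<in>Y. of_int (d y) * y) = (\<Sum>y\<in>Y. of_int (c y) * y)"
    using d by (simp add: sum_distrib_left algebra_simps)
  hence d0: "(\<Sum>y\<in>Y. of_int (d y) * y) = 0" using less.prems q_gt_1 by simp
  show ?case
  proof (rule ccontr)
    assume "\<not> (\<forall>y\<in>Y. c y = 0)"
    then obtain y0 where y0: "y0 \<in> Y" "c y0 \<noteq> 0" by blast
    have "\<bar>d y\<bar> \<le> \<bar>c y\<bar>" if "y \<in> Y" for y
    proof -
      have "1 * \<bar>d y\<bar> \<le> int q * \<bar>d y\<bar>" using q_gt_1 by (intro mult_right_mono) auto
      thus ?thesis using d that by (simp add: abs_mult)
    qed
    hence le: "\<forall>y\<in>Y. nat \<bar>d y\<bar> \<le> nat \<bar>c y\<bar>" by (auto intro: nat_mono)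
    have lt: "nat \<bar>d y0\<bar> < nat \<bar>c y0\<bar>"
    proof -
      have "d y0 \<noteq> 0" using d y0 by auto
      hence "\<bar>d y0\<bar> < int q * \<bar>d y0\<bar>" using q_gt_1 by simp
      thus ?thesis using d y0 by (simp add: abs_mult)
    qed
    have "(\<Sum>y\<in>Y. nat \<bar>d y\<bar>) < (\<Sum>y\<in>Y. nat \<bar>c y\<bar>)"
      using sum_strict_mono_ex1[OF assms(1) le] lt y0(1) by blast
    from less.hyps[OF this d0] show False using d y0 by auto
  qed
qed

lemma q_independent_imp_rat_independent:
  assumes "finite Y" "q_independent Y"
  shows "rat_vs.independent Y"
proof
  assume "rat_vs.dependent Y"
  then obtain t u where tu: "finite t" "t \<subseteq> Y" "(\<Sum>v\<in>t. of_rat (u v) * v) = 0" "\<exists>v\<in>t. u v \<noteq> 0"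
    unfolding rat_vs.dependent_explicit by auto
  define u' where "u' = (\<lambda>v. if v \<in> t then u v else 0)"
  have "(\<Sum>v\<in>Y. of_rat (u' v) * v) = (\<Sum>v\<in>t. of_rat (u v) * v)"
    unfolding u'_def using tu(2) assms(1) by (intro sum.mono_neutral_cong_right) auto
  hence u'0: "(\<Sum>v\<in>Y. of_rat (u' v) * v) = 0" using tu(3) by simp
  obtain D :: int where D: "D > 0" "\<forall>v\<in>Y. \<exists>n::int. of_int n = u' v * of_int D"
    using finite_rat_common_denominator[OF assms(1), of u'] by blast
  from bchoice[OF D(2)] obtain c where c: "\<forall>v\<in>Y. of_int (c v) = u' v * of_int D" by blast
  have "(\<Sum>v\<in>Y. of_int (c v) * v) = of_int D * (\<Sum>v\<in>Y. of_rat (u' v) * v)"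
    unfolding sum_distrib_left
  proof (rule sum.cong[OF refl])
    fix v assume "v \<in> Y"
    have "(of_int (c v) :: complex) = of_rat (of_int (c v))" by simp
    also have "\<dots> = of_rat (u' v) * of_int D" using c \<open>v \<in> Y\<close> by (simp add: of_rat_mult)
    finally show "of_int (c v) * v = of_int D * (of_rat (u' v) * v)" by simp
  qed
  hence "\<forall>v\<in>Y. c v = 0"
    using u'0 q_independent_combination_eq_0[OF assms] by simp
  obtain v where v: "v \<in> t" "u v \<noteq> 0" using tu(4) by blast
  hence "v \<in> Y" using tu(2) by blast
  hence "of_int (c v) = u v * of_int D" using c v(1) unfolding u'_def by simp
  hence "u v * of_int D = 0" using \<open>\<forall>v\<in>Y. c v = 0\<close> \<open>v \<in> Y\<close> by simp
  thus False using v(2) D(1) by simp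
qed

lemma q_independent_card_bound:
  obtains N where "\<And>Y. Y \<subseteq> K \<Longrightarrow> finite Y \<Longrightarrow> q_independent Y \<Longrightarrow> card Y \<le> N"
proof -
  obtain B where B: "finite B" "B \<subseteq> K" "\<forall>x\<in>K. \<exists>c. x = (\<Sum>b\<in>B. of_rat (c b) * b)"
    using K.number_field unfolding number_field_def by blast
  have "K \<subseteq> rat_vs.span B"
  proof
    fix x assume "x \<in> K"
    then obtain c where "x = (\<Sum>b\<in>B. of_rat (c b) * b)" using B(3) by blast
    thus "x \<in> rat_vs.span B"
      using rat_vs.span_sum[of B "\<lambda>b. of_rat (c b) * b" B] rat_vs.span_scale rat_vs.span_base
      by blast
  qed
  thus ?thesis
    using that[of "card B"] rat_vs.independent_span_bound[OF B(1) q_independent_imp_rat_independent]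
    by blast
qed

lemma q_dependent_extension:
  assumes Y: "finite Y" "q_independent Y" and x: "x \<in> R" "x \<notin> Y"
    and dep: "\<not> q_independent (insert x Y)"
  obtains c r where "r \<in> R" "of_int (c x) * x + (\<Sum>y\<in>Y. of_int (c y) * y) = of_nat q * r"
    "\<not> int q dvd c x"
proof -
  obtain c r where c: "r \<in> R" "(\<Sum>y\<in>insert x Y. of_int (c y) * y) = of_nat q * r"
    "\<exists>y\<in>insert x Y. \<not> int q dvd c y"
    using dep unfolding q_independent_def by blast
  have comb: "of_int (c x) * x + (\<Sum>y\<in>Y. of_int (c y) * y) = of_nat q * r"
    using c(2) Y(1) x(2) by simp
  have "\<not> int q dvd c x"
  proof
    assume "int q dvd c x"
    then obtain k where k: "c x = int q * k" by (auto simp: dvd_def)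
    have "(\<Sum>y\<in>Y. of_int (c y) * y) = of_nat q * (r - of_int k * x)"
      using comb k by (simp add: algebra_simps eq_diff_eq')
    moreover have "r - of_int k * x \<in> R"
      using c(1) x K.integers_diff K.integers_mult K.integers_of_int by simp
    ultimately have "\<forall>y\<in>Y. int q dvd c y" using Y(2) unfolding q_independent_def by blast
    thus False using c(3) \<open>int q dvd c x\<close> by auto
  qed
  thus thesis using that c(1) comb by blast
qed

text \<open>Multiplying by an inverse \<open>e\<close> of \<open>c x\<close> modulo \<open>q\<close> solves for \<open>x\<close>; reducing the coefficients
  \<open>-e c y\<close> modulo \<open>q\<close> moves the rest into \<open>qR\<close>.\<close>

lemma red_solve_combination:
  assumes Y: "Y \<subseteq> R" and x: "x \<in> R" and r: "r \<in> R"
    and comb: "of_int (c x) * x + (\<Sum>y\<in>Y. of_int (c y) * y) = of_nat q * r"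
    and ndvd: "\<not> int q dvd c x"
  shows "\<exists>g. (\<forall>y\<in>Y. g y \<in> {0..<int q}) \<and> rd x = rd (\<Sum>y\<in>Y. of_int (g y) * y)"
proof -
  have "coprime (c x) (int q)"
    using prime_imp_coprime[of "int q" "c x"] q_prime ndvd by (simp add: coprime_commute)
  then obtain e f where ef: "e * c x + f * int q = 1"
    using bezout_int[of "c x" "int q"] by (auto simp: coprime_iff_gcd_eq_1)
  define g where "g y = (- e * c y) mod int q" for y
  define h where "h y = (- e * c y) div int q" for y
  have gh: "- e * c y = g y + int q * h y" for y
    unfolding g_def h_def by simp
  have cx: "of_int (c x) * x = of_nat q * r - (\<Sum>y\<in>Y. of_int (c y) * y)"
    using comb by (simp add: eq_diff_eq)
  have "x = of_int (e * c x + f * int q) * x" using ef by simp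
  also have "\<dots> = of_int e * (of_int (c x) * x) + of_nat q * (of_int f * x)"
    by (simp add: algebra_simps)
  also have "\<dots> = of_int e * (of_nat q * r - (\<Sum>y\<in>Y. of_int (c y) * y)) + of_nat q * (of_int f * x)"
    unfolding cx ..
  also have "\<dots> = (\<Sum>y\<in>Y. of_int (- e * c y) * y) + of_nat q * (of_int e * r + of_int f * x)"
    by (simp add: algebra_simps sum_distrib_left sum_negf)
  also have "(\<Sum>y\<in>Y. of_int (- e * c y) * y)
      = (\<Sum>y\<in>Y. of_int (g y) * y) + of_nat q * (\<Sum>y\<in>Y. of_int (h y) * y)"
    unfolding gh by (simp add: algebra_simps sum.distrib sum_distrib_left)
  finally have "x - (\<Sum>y\<in>Y. of_int (g y) * y)
      = of_nat q * ((\<Sum>y\<in>Y. of_int (h y) * y) + (of_int e * r + of_int f * x))"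
    by (simp add: algebra_simps)
  moreover have comb_R: "(\<Sum>y\<in>Y. of_int (k y) * y) \<in> R" for k
    using Y by (intro K.integers_sum K.integers_mult K.integers_of_int) auto
  moreover have "(\<Sum>y\<in>Y. of_int (h y) * y) + (of_int e * r + of_int f * x) \<in> R"
    using comb_R[of h] r x K.integers_add K.integers_mult K.integers_of_int by simp
  ultimately have "rd x = rd (\<Sum>y\<in>Y. of_int (g y) * y)"
    using red_eq_red_iff[OF x comb_R[of g]] by blast
  moreover have "\<forall>y\<in>Y. g y \<in> {0..<int q}" unfolding g_def using q_gt_1 by simp
  ultimately show ?thesis by blast
qed

lemma finite_Rq: "finite (carrier Rq)"
proof -
  obtain N where N: "\<And>Y. Y \<subseteq> K \<Longrightarrow> finite Y \<Longrightarrow> q_independent Y \<Longrightarrow> card Y \<le> N"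
    using q_independent_card_bound by blast
  define P where "P Y \<longleftrightarrow> Y \<subseteq> R \<and> finite Y \<and> q_independent Y" for Y
  have "P {}" unfolding P_def q_independent_def by simp
  moreover have "P Y \<Longrightarrow> card Y \<le> N" for Y unfolding P_def using N K.integers_subset by blast
  ultimately have "\<exists>m. (\<exists>Y. P Y \<and> card Y = m) \<and> (\<forall>k. (\<exists>Y. P Y \<and> card Y = k) \<longrightarrow> k \<le> m)"
    by (intro Nat.ex_has_greatest_nat[of _ 0 N]) auto
  then obtain Y where Y: "P Y" and max: "\<And>Z. P Z \<Longrightarrow> card Z \<le> card Y" by blast
  hence YR: "Y \<subseteq> R" "finite Y" "q_independent Y" unfolding P_def by auto
  define G where "G = (\<lambda>g. rd (\<Sum>y\<in>Y. of_int (g y) * y)) ` (Y \<rightarrow>\<^sub>E {0..<int q})"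
  have "rd x \<in> rd ` Y \<union> G" if x: "x \<in> R" for x
  proof (cases "x \<in> Y")
    case False
    have "\<not> P (insert x Y)" using max[of "insert x Y"] YR False by auto
    hence "\<not> q_independent (insert x Y)" unfolding P_def using YR x by auto
    then obtain c r where "r \<in> R" "of_int (c x) * x + (\<Sum>y\<in>Y. of_int (c y) * y) = of_nat q * r"
      "\<not> int q dvd c x"
      using q_dependent_extension[OF YR(2,3) x False] by blast
    then obtain g where g: "\<forall>y\<in>Y. g y \<in> {0..<int q}" "rd x = rd (\<Sum>y\<in>Y. of_int (g y) * y)"
      using red_solve_combination[OF YR(1) x] by blast
    have "rd x = rd (\<Sum>y\<in>Y. of_int (restrict g Y y) * y)" using g(2) by simp
    thus ?thesis using g(1) unfolding G_def by (intro UnI2 image_eqI[where x="restrict g Y"]) auto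
  qed simp
  hence "carrier Rq \<subseteq> rd ` Y \<union> G" unfolding carrier_Rq by blast
  moreover have "finite (rd ` Y \<union> G)"
    using YR(2) unfolding G_def by (simp add: finite_PiE)
  ultimately show ?thesis by (rule finite_subset)
qed

lemma finite_Sq: "finite Sq"
  using finite_Rq Sq_subset finite_subset by blast

end

section \<open>The trace of the sampled distribution\<close>

lemma A_dist_eq_bind_pmf_of_set:
  assumes "monoid Rq" "a0 \<in> Units Rq" "finite Sq" "Sq \<noteq> {}" "Sq \<subseteq> carrier Rq"
  shows "A_dist Rq Sq a0 s chi =
    pmf_of_set Sq \<bind> (\<lambda>c. chi \<bind> (\<lambda>e.
      return_pmf (a0 \<otimes>\<^bsub>Rq\<^esub> c, (a0 \<otimes>\<^bsub>Rq\<^esub> c) \<otimes>\<^bsub>Rq\<^esub> s \<oplus>\<^bsub>Rq\<^esub> e)))"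
proof -
  have "inj_on (\<lambda>c. a0 \<otimes>\<^bsub>Rq\<^esub> c) Sq"
    using monoid.Units_l_cancel[OF assms(1,2)] assms(5) by (auto intro!: inj_onI)
  hence eq: "pmf_of_set ((\<lambda>c. a0 \<otimes>\<^bsub>Rq\<^esub> c) ` Sq) = map_pmf (\<lambda>c. a0 \<otimes>\<^bsub>Rq\<^esub> c) (pmf_of_set Sq)"
    using map_pmf_of_set_inj assms(3,4) by metis
  show ?thesis unfolding A_dist_def eq unfolding bind_map_pmf ..
qed

lemma map_pmf_of_set_mult_unit:
  assumes "comm_monoid M" "finite A" and A: "A \<subseteq> carrier M"
    and mult_closed: "\<And>c d. c \<in> A \<Longrightarrow> d \<in> A \<Longrightarrow> c \<otimes>\<^bsub>M\<^esub> d \<in> A"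
    and u: "u \<in> A" "v \<in> A" "u \<otimes>\<^bsub>M\<^esub> v = \<one>\<^bsub>M\<^esub>"
  shows "map_pmf (\<lambda>c. u \<otimes>\<^bsub>M\<^esub> c) (pmf_of_set A) = pmf_of_set A"
proof -
  interpret comm_monoid M by fact
  have "v \<otimes>\<^bsub>M\<^esub> u = \<one>\<^bsub>M\<^esub>" using m_comm[of v u] u A by auto
  hence unit: "u \<in> Units M" unfolding Units_def using u A by auto
  have inj: "inj_on (\<lambda>c. u \<otimes>\<^bsub>M\<^esub> c) A"
    by (rule inj_onI) (use Units_l_cancel[OF unit] A in auto)
  have "(\<lambda>c. u \<otimes>\<^bsub>M\<^esub> c) ` A = A"
  proof
    show "(\<lambda>c. u \<otimes>\<^bsub>M\<^esub> c) ` A \<subseteq> A" using mult_closed u(1) by auto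
    show "A \<subseteq> (\<lambda>c. u \<otimes>\<^bsub>M\<^esub> c) ` A"
    proof
      fix d assume d: "d \<in> A"
      have "u \<otimes>\<^bsub>M\<^esub> (v \<otimes>\<^bsub>M\<^esub> d) = d"
        using u d A by (simp add: m_assoc[symmetric] subset_iff)
      thus "d \<in> (\<lambda>c. u \<otimes>\<^bsub>M\<^esub> c) ` A"
        using mult_closed[OF u(2) d] by (auto intro: image_eqI[where x="v \<otimes>\<^bsub>M\<^esub> d"])
    qed
  qed
  moreover have "A \<noteq> {}" using u by blast
  ultimately show ?thesis using map_pmf_of_set_inj[OF inj _ assms(2)] by simp
qed

context galois_mod_q
begin

lemma traceq_mult_Sq:
  assumes X: "X \<in> carrier Rq" and c: "c \<in> Sq"
  shows "T (X \<otimes>\<^bsub>Rq\<^esub> c) = T X \<otimes>\<^bsub>Rq\<^esub> c"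
proof -
  interpret cring Rq by (rule cring_Rq)
  have c': "c \<in> carrier Rq" using c Sq_subset by blast
  have TX: "T X \<in> carrier Rq" using traceq_in_Sq[OF X] Sq_subset by blast
  have "T (X \<otimes>\<^bsub>Rq\<^esub> c) = T (c \<otimes>\<^bsub>Rq\<^esub> X)" using m_comm[OF X c'] by simp
  also have "\<dots> = c \<otimes>\<^bsub>Rq\<^esub> T X" using traceq_Sq_linear[OF c X] .
  also have "\<dots> = T X \<otimes>\<^bsub>Rq\<^esub> c" using m_comm[OF c' TX] .
  finally show ?thesis .
qed

lemma traceq_A_sample:
  assumes a0: "a0 \<in> carrier Rq" and s: "s \<in> carrier Rq" and e: "e \<in> carrier Rq"
    and c: "c \<in> Sq" and y: "y \<in> Sq" "T a0 \<otimes>\<^bsub>Rq\<^esub> y = \<one>\<^bsub>Rq\<^esub>"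
  shows "T ((a0 \<otimes>\<^bsub>Rq\<^esub> c) \<otimes>\<^bsub>Rq\<^esub> s \<oplus>\<^bsub>Rq\<^esub> e)
       = (T a0 \<otimes>\<^bsub>Rq\<^esub> c) \<otimes>\<^bsub>Rq\<^esub> (T (a0 \<otimes>\<^bsub>Rq\<^esub> s) \<otimes>\<^bsub>Rq\<^esub> y) \<oplus>\<^bsub>Rq\<^esub> T e"
proof -
  interpret cring Rq by (rule cring_Rq)
  have c': "c \<in> carrier Rq" and y': "y \<in> carrier Rq" using c y Sq_subset by auto
  have Ts: "T (a0 \<otimes>\<^bsub>Rq\<^esub> s) \<in> carrier Rq" and Ta0: "T a0 \<in> carrier Rq"
    using a0 s traceq_in_Sq Sq_subset by auto
  have "(a0 \<otimes>\<^bsub>Rq\<^esub> c) \<otimes>\<^bsub>Rq\<^esub> s = (a0 \<otimes>\<^bsub>Rq\<^esub> s) \<otimes>\<^bsub>Rq\<^esub> c"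
    using a0 s c' by (simp add: m_ac)
  hence "T ((a0 \<otimes>\<^bsub>Rq\<^esub> c) \<otimes>\<^bsub>Rq\<^esub> s \<oplus>\<^bsub>Rq\<^esub> e) = T ((a0 \<otimes>\<^bsub>Rq\<^esub> s) \<otimes>\<^bsub>Rq\<^esub> c) \<oplus>\<^bsub>Rq\<^esub> T e"
    using a0 s e c' traceq_add by simp
  also have "\<dots> = T (a0 \<otimes>\<^bsub>Rq\<^esub> s) \<otimes>\<^bsub>Rq\<^esub> c \<oplus>\<^bsub>Rq\<^esub> T e"
    using traceq_mult_Sq[OF _ c] a0 s by simp
  also have "T (a0 \<otimes>\<^bsub>Rq\<^esub> s) \<otimes>\<^bsub>Rq\<^esub> c
      = (T (a0 \<otimes>\<^bsub>Rq\<^esub> s) \<otimes>\<^bsub>Rq\<^esub> c) \<otimes>\<^bsub>Rq\<^esub> (T a0 \<otimes>\<^bsub>Rq\<^esub> y)"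
    using y(2) Ts c' by simp
  also have "\<dots> = (T a0 \<otimes>\<^bsub>Rq\<^esub> c) \<otimes>\<^bsub>Rq\<^esub> (T (a0 \<otimes>\<^bsub>Rq\<^esub> s) \<otimes>\<^bsub>Rq\<^esub> y)"
    using Ts Ta0 c' y' by (simp add: m_ac)
  finally show ?thesis .
qed

lemma trace_A_dist_eq_RLWE_dist:
  assumes s: "s \<in> carrier Rq" and a0: "a0 \<in> Units Rq"
    and y: "y \<in> Sq" "T a0 \<otimes>\<^bsub>Rq\<^esub> y = \<one>\<^bsub>Rq\<^esub>"
    and chi: "set_pmf chi \<subseteq> carrier Rq"
  shows "map_pmf (\<lambda>(a, b). (T a, T b)) (A_dist Rq Sq a0 s chi) =
         RLWE_dist Rq Sq (T (a0 \<otimes>\<^bsub>Rq\<^esub> s) \<otimes>\<^bsub>Rq\<^esub> inv\<^bsub>Rq\<^esub> (T a0)) (map_pmf T chi)"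
proof -
  interpret cring Rq by (rule cring_Rq)
  define s' where "s' = T (a0 \<otimes>\<^bsub>Rq\<^esub> s) \<otimes>\<^bsub>Rq\<^esub> y"
  have a0': "a0 \<in> carrier Rq" using a0 by blast
  have Ta0: "T a0 \<in> Sq" using traceq_in_Sq[OF a0'] .
  have "map_pmf (\<lambda>(a, b). (T a, T b)) (A_dist Rq Sq a0 s chi) =
      pmf_of_set Sq \<bind> (\<lambda>c. chi \<bind> (\<lambda>e.
        return_pmf (T (a0 \<otimes>\<^bsub>Rq\<^esub> c), T ((a0 \<otimes>\<^bsub>Rq\<^esub> c) \<otimes>\<^bsub>Rq\<^esub> s \<oplus>\<^bsub>Rq\<^esub> e))))"
    unfolding A_dist_eq_bind_pmf_of_set[OF monoid_axioms a0 finite_Sq Sq_nonempty Sq_subset]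
    by (simp add: map_bind_pmf)
  also have "\<dots> = pmf_of_set Sq \<bind> (\<lambda>c. chi \<bind> (\<lambda>e.
        return_pmf (T a0 \<otimes>\<^bsub>Rq\<^esub> c, (T a0 \<otimes>\<^bsub>Rq\<^esub> c) \<otimes>\<^bsub>Rq\<^esub> s' \<oplus>\<^bsub>Rq\<^esub> T e)))"
  proof (intro bind_pmf_cong refl)
    fix c e assume c: "c \<in> set_pmf (pmf_of_set Sq)" and e: "e \<in> set_pmf chi"
    have "c \<in> Sq" using c finite_Sq Sq_nonempty by simp
    thus "return_pmf (T (a0 \<otimes>\<^bsub>Rq\<^esub> c), T ((a0 \<otimes>\<^bsub>Rq\<^esub> c) \<otimes>\<^bsub>Rq\<^esub> s \<oplus>\<^bsub>Rq\<^esub> e)) =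
        return_pmf (T a0 \<otimes>\<^bsub>Rq\<^esub> c, (T a0 \<otimes>\<^bsub>Rq\<^esub> c) \<otimes>\<^bsub>Rq\<^esub> s' \<oplus>\<^bsub>Rq\<^esub> T e)"
      using traceq_A_sample[OF a0' s _ _ y] traceq_mult_Sq[OF a0'] e chi
      unfolding s'_def by auto
  qed
  also have "\<dots> = map_pmf (\<lambda>c. T a0 \<otimes>\<^bsub>Rq\<^esub> c) (pmf_of_set Sq) \<bind>
      (\<lambda>a. chi \<bind> (\<lambda>e. return_pmf (a, a \<otimes>\<^bsub>Rq\<^esub> s' \<oplus>\<^bsub>Rq\<^esub> T e)))"
    unfolding bind_map_pmf ..
  also have "\<dots> = pmf_of_set Sq \<bind>
      (\<lambda>a. chi \<bind> (\<lambda>e. return_pmf (a, a \<otimes>\<^bsub>Rq\<^esub> s' \<oplus>\<^bsub>Rq\<^esub> T e)))"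
    using map_pmf_of_set_mult_unit[OF comm_monoid_axioms finite_Sq Sq_subset Sq_mult Ta0 y] by simp
  also have "\<dots> = RLWE_dist Rq Sq s' (map_pmf T chi)"
    unfolding RLWE_dist_def bind_map_pmf ..
  also have "s' = T (a0 \<otimes>\<^bsub>Rq\<^esub> s) \<otimes>\<^bsub>Rq\<^esub> inv\<^bsub>Rq\<^esub> (T a0)"
    unfolding s'_def using comm_inv_char y Ta0 Sq_subset by auto
  finally show ?thesis .
qed

end

theorem mainTheorem4:
  fixes K L :: "complex set" and q :: nat
    and a0 s :: "complex set" and chi :: "complex set pmf"
  defines "R \<equiv> ring_of_integers K" and "S \<equiv> ring_of_integers L"
  defines "Rq \<equiv> quot_q R q" and "Sq \<equiv> Sq_in_Rq R S q"
  defines "T \<equiv> traceq K L q"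
  assumes galois: "galois_ext K L"
    and q_prime: "prime q"
    and s_in: "s \<in> carrier Rq"
    and a0_unit: "a0 \<in> Units Rq"
    and Ta0_unit: "\<exists>y\<in>Sq. T a0 \<otimes>\<^bsub>Rq\<^esub> y = \<one>\<^bsub>Rq\<^esub>"
    and chi_supp: "set_pmf chi \<subseteq> carrier Rq"
  shows "map_pmf (\<lambda>(a, b). (T a, T b)) (A_dist Rq Sq a0 s chi) =
         RLWE_dist Rq Sq (T (a0 \<otimes>\<^bsub>Rq\<^esub> s) \<otimes>\<^bsub>Rq\<^esub> inv\<^bsub>Rq\<^esub> (T a0)) (map_pmf T chi)"
proof -
  interpret galois_mod_q K L q by (rule galois_mod_q.intro[OF galois q_prime])
  obtain y where "y \<in> Sq" "T a0 \<otimes>\<^bsub>Rq\<^esub> y = \<one>\<^bsub>Rq\<^esub>" using Ta0_unit by blast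
  with s_in a0_unit chi_supp show ?thesis
    unfolding R_def S_def Rq_def Sq_def T_def by (intro trace_A_dist_eq_RLWE_dist)
qed

end
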